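(* For every $w\in W^{\mathfrak p}$ the number of arcs of the matching $M(\alpha_w)$ that join a negative point to a positive point is even. Consequently the cup diagram $C(w)$ is defined, and the assignment $w\mapsto C(w)$ is a bijection from $W^{\mathfrak p}$ onto the set $C(W^{\mathfrak p})=\{C(w)\mid w\in W^{\mathfrak p}\}$ (i.e. it is injective).
   Context: Let $n\ge 4$ and let $W$ be the Weyl group of type $D_n$: the Coxeter group on generators $s_0,\dots,s_{n-1}$ with $(s_is_j)^{m_{ij}}=e$, where $m_{ii}=1$, $m_{02}=m_{12}=3$, $m_{i,i+1}=3$ for $2\le i\le n-2$, and $m_{ij}=2$ otherwise. Let $l$ be the length function, $W_{\mathfrak p}=\langle s_1,\dots,s_{n-1}\rangle$, and $W^{\mathfrak p}=\{w\in W\mid l(sw)>l(w)\text{ for all } s\in\{s_1,\dots,s_{n-1}\}\}$ the minimal length representatives of $W_{\mathfrak p}\backslash W$. $W$ acts on the right on $\{+,-\}^n$: $s_i$ ($1\le i\le n-1$) swaps entries $i$ and $i+1$; $s_0$ sends $(a_1,a_2,a_3,\dots,a_n)$ to $(-a_2,-a_1,a_3,\dots,a_n)$. For $w\in W^{\mathfrak p}$ put $(\alpha_1,\dots,\alpha_n)=(+,\dots,+)\cdot w$ and $\alpha_{-i}=-\alpha_i$; the sequence $\alpha_w=(\alpha_{-n},\dots,\alpha_{-1},\alpha_1,\dots,\alpha_n)$. Let $P=\{-2n,\dots,-1,1,\dots,2n\}\subset\mathbb R$. The extended labeling of $P$ attached to $w$ puts $+$ at every $j<-n$, $-$ at every $j>n$,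 and $\alpha_j$ at $j$ with $1\le |j|\le n$. The matching $M(\alpha_w)$ is the (unique) set of $2n$ pairwise non-intersecting arcs in the lower half plane, each point of $P$ an endpoint of exactly one arc, each arc joining a point labeled $+$ to a point labeled $-$ with the $+$ point to the left. The cup diagram $C(w)$: the arcs of $M(\alpha_w)$ joining a negative to a positive point are of the form $(-y,y)$; list them as $y_1<y_2<\dots<y_{2k}$. For each $j=1,\dots,k$ replace the arcs $(-y_{2j-1},y_{2j-1})$ and $(-y_{2j},y_{2j})$ by the two arcs joining $-y_{2j}$ to $y_{2j-1}$ and $-y_{2j-1}$ to $y_{2j}$ (these cross once on the line $x=0$ and are called a linked pair). All other arcs are kept. *)

theory Defs
  imports Main
begin

text \<open>Elements of W are represented by words in the generators s_0,...,s_{n-1}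
  (lists of indices < n), modulo the congruence generated by the Coxeter relations.\<close>

definition cox_m :: "nat \<Rightarrow> nat \<Rightarrow> nat \<Rightarrow> nat" where
  "cox_m n i j =
     (if i = j then 1
      else if {i, j} = {0, 2} \<or> {i, j} = {1, 2} then 3
      else if 2 \<le> min i j \<and> max i j = min i j + 1 \<and> max i j \<le> n - 1 then 3
      else 2)"

definition relator :: "nat \<Rightarrow> nat \<Rightarrow> nat \<Rightarrow> nat list" where
  "relator n i j = concat (replicate (cox_m n i j) [i, j])"

inductive cox_eq :: "nat \<Rightarrow> nat list \<Rightarrow> nat list \<Rightarrow> bool" for n where
  cox_refl: "cox_eq n u u"
| cox_sym: "cox_eq n u v \<Longrightarrow> cox_eq n v u"
| cox_trans: "cox_eq n u v \<Longrightarrow> cox_eq n v w \<Longrightarrow> cox_eq n u w"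
| cox_rel: "i < n \<Longrightarrow> j < n \<Longrightarrow> cox_eq n (u @ relator n i j @ v) (u @ v)"

definition is_word :: "nat \<Rightarrow> nat list \<Rightarrow> bool" where
  "is_word n u \<longleftrightarrow> set u \<subseteq> {..<n}"

definition cox_len :: "nat \<Rightarrow> nat list \<Rightarrow> nat" where
  "cox_len n u = (LEAST k. \<exists>v. cox_eq n u v \<and> length v = k)"

definition in_Wp :: "nat \<Rightarrow> nat list \<Rightarrow> bool" where
  "in_Wp n u \<longleftrightarrow> is_word n u \<and> (\<forall>i\<in>{1..<n}. cox_len n u < cox_len n (i # u))"

section \<open>Right action on sign sequences (True = +, indices 1..n)\<close>

definition act_gen :: "nat \<Rightarrow> (nat \<Rightarrow> bool) \<Rightarrow> (nat \<Rightarrow> bool)" where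
  "act_gen i a = (if i = 0 then a(1 := \<not> a 2, 2 := \<not> a 1)
                  else a(i := a (i + 1), i + 1 := a i))"

definition alpha :: "nat list \<Rightarrow> nat \<Rightarrow> bool" where
  "alpha u = fold act_gen u (\<lambda>_. True)"

definition Pts :: "nat \<Rightarrow> int set" where
  "Pts n = {-2 * int n..2 * int n} - {0}"

definition ext_label :: "nat \<Rightarrow> nat list \<Rightarrow> int \<Rightarrow> bool" where
  "ext_label n u j =
     (if j < - int n then True
      else if j > int n then False
      else if j > 0 then alpha u (nat j)
      else \<not> alpha u (nat (- j)))"

definition is_matching :: "nat \<Rightarrow> (int \<Rightarrow> bool) \<Rightarrow> (int \<times> int) set \<Rightarrow> bool" where
  "is_matching n lab M \<longleftrightarrow>
     card M = 2 * n \<and>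
     (\<forall>(a, b)\<in>M. a \<in> Pts n \<and> b \<in> Pts n \<and> a < b \<and> lab a \<and> \<not> lab b) \<and>
     (\<forall>p\<in>Pts n. \<exists>!e\<in>M. fst e = p \<or> snd e = p) \<and>
     (\<forall>(a, b)\<in>M. \<forall>(c, d)\<in>M. \<not> (a < c \<and> c < b \<and> b < d))"

definition matching :: "nat \<Rightarrow> nat list \<Rightarrow> (int \<times> int) set" where
  "matching n u = (THE M. is_matching n (ext_label n u) M)"

definition neg_pos_arcs :: "nat \<Rightarrow> nat list \<Rightarrow> (int \<times> int) set" where
  "neg_pos_arcs n u = {(a, b) \<in> matching n u. a < 0 \<and> 0 < b}"

definition cup_diagram :: "nat \<Rightarrow> nat list \<Rightarrow> (int \<times> int) set" where
  "cup_diagram n u =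
     (let ys = sorted_list_of_set {y. y > 0 \<and> (- y, y) \<in> neg_pos_arcs n u};
          k = length ys div 2
      in (matching n u - neg_pos_arcs n u) \<union>
         (\<Union>i<k. {(- (ys ! (2 * i + 1)), ys ! (2 * i)), (- (ys ! (2 * i)), ys ! (2 * i + 1))}))"

end

theory Submission
  imports Defs
begin

text \<open>
  The sign sequence \<open>\<alpha>\<^sub>w\<close> determines \<open>w \<in> W\<^sup>\<pp>\<close>: every word \<open>v\<close> equals, modulo the Coxeter
  relations and without becoming longer, a word in \<open>s\<^sub>1, \<dots>, s\<^bsub>n-1\<^esub>\<close> followed by a canonical
  word that depends only on \<open>\<alpha>\<^sub>v\<close>. For a minimal length word of an element of \<open>W\<^sup>\<pp>\<close> the first
  factor must be empty, since otherwise left multiplication by one of its letters would shorten \<open>w\<close>.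

  The extended labeling is balanced like a Dyck word, so the non-crossing matching exists and is
  unique, and on \<open>[-n, n]\<close> it is antisymmetric under \<open>p \<mapsto> -p\<close>. A positive point is labelled \<open>+\<close>
  iff it is the left end of an arc, and the cup diagram only alters arcs with negative left end,
  so \<open>C(w)\<close> determines \<open>\<alpha>\<^sub>w\<close>. The arcs from a negative to a positive point are the arcs starting
  at one of the \<open>2 n\<close> negative points minus those ending there, and hence are even in number.
\<close>

lemma cox_eq_context: "cox_eq n x y \<Longrightarrow> cox_eq n (u @ x @ w) (u @ y @ w)"
proof (induction rule: cox_eq.induct)
  case (cox_rel i j a b)
  from cox_eq.cox_rel[OF cox_rel, of "u @ a" "b @ w"] show ?case by simp
qed (auto intro: cox_eq.intros)

lemma cox_eq_square: "i < n \<Longrightarrow> cox_eq n [i, i] []"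
  using cox_eq.cox_rel[of i n i "[]" "[]"] by (simp add: relator_def cox_m_def)

declare cox_eq.cox_trans [trans]

lemma cox_eq_commute:
  assumes "cox_m n i j = 2" "i < n" "j < n"
  shows "cox_eq n [i, j] [j, i]"
proof -
  have "cox_eq n [j, i] ([] @ [i, i] @ [j, i])"
    using cox_eq_context[OF cox_eq_square[OF assms(2)], of "[]" "[j, i]"]
      by (simp add: cox_eq.cox_sym)
  also have "cox_eq n \<dots> ([i, i, j, i] @ [j, j] @ [])"
    using cox_eq_context[OF cox_eq_square[OF assms(3)], of "[i, i, j, i]" "[]"]
      by (simp add: cox_eq.cox_sym)
  also have "cox_eq n \<dots> ([i] @ relator n i j @ [j])"
    using assms(1) by (simp add: relator_def numeral_2_eq_2 cox_eq.cox_refl)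
  also have "cox_eq n \<dots> [i, j]"
    using cox_eq.cox_rel[OF assms(2,3), of "[i]" "[j]"] by simp
  finally show ?thesis by (rule cox_eq.cox_sym)
qed

lemma cox_eq_braid:
  assumes "cox_m n i j = 3" "i < n" "j < n"
  shows "cox_eq n [i, j, i] [j, i, j]"
proof -
  have "cox_eq n [j, i, j] ([] @ relator n i j @ [j, i, j])"
    using cox_eq.cox_rel[OF assms(2,3), of "[]" "[j, i, j]"] by (simp add: cox_eq.cox_sym)
  also have "\<dots> = [i, j, i, j, i] @ [j, j] @ [i, j]"
    using assms(1) by (simp add: relator_def numeral_3_eq_3)
  also have "cox_eq n \<dots> ([i, j, i, j] @ [i, i] @ [j])"
    using cox_eq_context[OF cox_eq_square[OF assms(3)], of "[i, j, i, j, i]" "[i, j]"] by simp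
  also have "cox_eq n \<dots> ([i, j, i] @ [j, j] @ [])"
    using cox_eq_context[OF cox_eq_square[OF assms(2)], of "[i, j, i, j]" "[j]"] by simp
  also have "cox_eq n \<dots> [i, j, i]"
    using cox_eq_context[OF cox_eq_square[OF assms(3)], of "[i, j, i]" "[]"] by simp
  finally show ?thesis by (rule cox_eq.cox_sym)
qed

lemma cox_eq_is_word: "cox_eq n u v \<Longrightarrow> is_word n u \<longleftrightarrow> is_word n v"
proof (induction rule: cox_eq.induct)
  case (cox_rel i j a b)
  then have "set (relator n i j) \<subseteq> {..<n}" by (auto simp: relator_def)
  then show ?case by (auto simp: is_word_def)
qed blast+

definition braided :: "nat \<Rightarrow> nat \<Rightarrow> bool" where
  "braided i j \<longleftrightarrow> (i = 2 \<and> j \<le> 1) \<or> (j = 2 \<and> i \<le> 1) \<or> (2 \<le> i \<and> j = i + 1) \<or> (2 \<le> j \<and> i = j + 1)"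

lemma braided_sym: "braided i j \<longleftrightarrow> braided j i"
  unfolding braided_def by blast

lemma cox_m_eq_3_iff: "i < n \<Longrightarrow> j < n \<Longrightarrow> cox_m n i j = 3 \<longleftrightarrow> braided i j"
  by (auto simp: cox_m_def braided_def doubleton_eq_iff min_def max_def)

lemma cox_m_eq_2_iff: "i < n \<Longrightarrow> j < n \<Longrightarrow> cox_m n i j = 2 \<longleftrightarrow> i \<noteq> j \<and> \<not> braided i j"
  by (auto simp: cox_m_def braided_def doubleton_eq_iff min_def max_def)

lemma cox_m_cases: "cox_m n i j = 1 \<and> i = j \<or> cox_m n i j = 2 \<or> cox_m n i j = 3"
  by (simp add: cox_m_def)

section \<open>The action on sign sequences factors through W\<close>

lemma act_gen_apply:
  "act_gen i a x =
     (if i = 0 then (if x = 2 then \<not> a 1 else if x = 1 then \<not> a 2 else a x)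
      else (if x = i + 1 then a i else if x = i then a (i + 1) else a x))"
  by (simp add: act_gen_def)

lemma act_gen_involutive: "act_gen i (act_gen i a) = a"
  by (rule ext) (simp add: act_gen_apply)

lemma act_gen_commute:
  assumes "i \<noteq> j" "\<not> braided i j"
  shows "act_gen i (act_gen j a) = act_gen j (act_gen i a)"
proof -
  have "(i = 0 \<and> j = 1) \<or> (i = 1 \<and> j = 0) \<or> (i = 0 \<and> 3 \<le> j) \<or> (j = 0 \<and> 3 \<le> i)
    \<or> (1 \<le> i \<and> i + 2 \<le> j) \<or> (1 \<le> j \<and> j + 2 \<le> i)"
    using assms unfolding braided_def by presburger
  then show ?thesis
    by (elim disjE conjE) (rule ext; simp add: act_gen_apply numeral_2_eq_2)+
qed

lemma act_gen_braid:
  assumes "braided i j"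
  shows "act_gen j (act_gen i (act_gen j (act_gen i (act_gen j (act_gen i a))))) = a"
proof -
  have "(i = 0 \<and> j = 2) \<or> (i = 2 \<and> j = 0) \<or> (i = 1 \<and> j = 2) \<or> (i = 2 \<and> j = 1)
    \<or> (2 \<le> i \<and> j = i + 1) \<or> (2 \<le> j \<and> i = j + 1)"
    using assms unfolding braided_def by presburger
  then show ?thesis
    by (elim disjE conjE) (rule ext; simp add: act_gen_apply numeral_2_eq_2)+
qed

lemma fold_act_gen_relator:
  assumes "i < n" "j < n"
  shows "fold act_gen (relator n i j) a = a"
  using cox_m_cases[of n i j]
proof (elim disjE conjE)
  assume "cox_m n i j = 2"
  then have "act_gen i (act_gen j (act_gen i a)) = act_gen j a"
    using act_gen_commute act_gen_involutive cox_m_eq_2_iff[OF assms] by metis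
  then show ?thesis using \<open>cox_m n i j = 2\<close>
    by (simp add: relator_def numeral_2_eq_2 act_gen_involutive)
next
  assume "cox_m n i j = 3"
  then show ?thesis using act_gen_braid cox_m_eq_3_iff[OF assms]
    by (simp add: relator_def numeral_3_eq_3)
qed (simp add: relator_def act_gen_involutive)

lemma alpha_append: "alpha (u @ v) = fold act_gen v (alpha u)"
  by (simp add: alpha_def)

lemma cox_eq_alpha: "cox_eq n u v \<Longrightarrow> alpha u = alpha v"
proof -
  have "cox_eq n u v \<Longrightarrow> fold act_gen u a = fold act_gen v a" for a
    by (induction rule: cox_eq.induct) (simp_all add: fold_act_gen_relator)
  then show "cox_eq n u v \<Longrightarrow> alpha u = alpha v" by (simp add: alpha_def)
qed

section \<open>Canonical reduced words\<close>

definition descent :: "nat \<Rightarrow> (nat \<Rightarrow> bool) \<Rightarrow> nat \<Rightarrow> bool" where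
  "descent n a i \<longleftrightarrow> i < n \<and> (if i = 0 then \<not> a 1 \<and> \<not> a 2 else a i \<and> \<not> a (i + 1))"

definition ascent :: "nat \<Rightarrow> (nat \<Rightarrow> bool) \<Rightarrow> nat \<Rightarrow> bool" where
  "ascent n a i \<longleftrightarrow> i < n \<and> (if i = 0 then a 1 \<and> a 2 else \<not> a i \<and> a (i + 1))"

definition sign_length :: "nat \<Rightarrow> (nat \<Rightarrow> bool) \<Rightarrow> nat" where
  "sign_length n a = (\<Sum>m\<in>{1..n}. if a m then 0 else m - 1)"

definition minus_count :: "nat \<Rightarrow> (nat \<Rightarrow> bool) \<Rightarrow> nat" where
  "minus_count n a = (\<Sum>m\<in>{1..n}. if a m then 0 else 1)"

definition admissible :: "nat \<Rightarrow> (nat \<Rightarrow> bool) \<Rightarrow> bool" where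
  "admissible n a \<longleftrightarrow> a 0 \<and> (\<forall>m>n. a m) \<and> even (minus_count n a)"

text \<open>The decrease of \<open>sign_length\<close> in the guard
  only matters for termination: it holds for every descent once \<open>2 \<le> n\<close>.\<close>
function canon_word :: "nat \<Rightarrow> (nat \<Rightarrow> bool) \<Rightarrow> nat list" where
  "canon_word n a =
     (if \<exists>d. descent n a d \<and> sign_length n (act_gen d a) < sign_length n a
      then (let d = (LEAST d. descent n a d \<and> sign_length n (act_gen d a) < sign_length n a)
            in canon_word n (act_gen d a) @ [d])
      else [])"
  by pat_completeness auto
termination
proof (relation "measure (\<lambda>(n, a). sign_length n a)")
  fix n a d
  assume "\<exists>d. descent n a d \<and> sign_length n (act_gen d a) < sign_length n a"
    and "d = (LEAST d. descent n a d \<and> sign_length n (act_gen d a) < sign_length n a)"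
  then show "((n, act_gen d a), n, a) \<in> measure (\<lambda>(n, a). sign_length n a)"
    by (metis (mono_tags, lifting) LeastI_ex case_prod_conv in_measure)
qed auto

declare canon_word.simps [simp del]

lemma sum_cong_except_two:
  fixes f g :: "nat \<Rightarrow> nat"
  assumes "finite A" "i \<in> A" "j \<in> A" "i \<noteq> j" "\<And>x. x \<in> A \<Longrightarrow> x \<noteq> i \<Longrightarrow> x \<noteq> j \<Longrightarrow> g x = f x"
  shows "sum g A + f i + f j = sum f A + g i + g j"
proof -
  have "sum g (A - {i} - {j}) = sum f (A - {i} - {j})"
    using assms(5) by (intro sum.cong) auto
  then show ?thesis
    using assms(1-4) by (simp add: sum.remove[of A i] sum.remove[of "A - {i}" j])
qed

lemma sign_length_act_descent:
  assumes "2 \<le> n" "descent n a i"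
  shows "sign_length n (act_gen i a) + 1 = sign_length n a"
proof (cases "i = 0")
  case True
  then have "\<not> a 1" "\<not> a 2" using assms(2) by (auto simp: descent_def)
  moreover have "sign_length n (act_gen i a)
      + (if a 1 then 0 else 1 - 1) + (if a 2 then 0 else 2 - 1)
    = sign_length n a + (if act_gen i a 1 then 0 else 1 - 1) + (if act_gen i a 2 then 0 else 2 - 1)"
    unfolding sign_length_def using assms(1) True
    by (intro sum_cong_except_two) (auto simp: act_gen_apply)
  ultimately show ?thesis using True by (simp add: act_gen_apply)
next
  case False
  then have "a i" "\<not> a (i + 1)" "i < n" using assms(2) by (auto simp: descent_def)
  moreover have "sign_length n (act_gen i a)
      + (if a i then 0 else i - 1) + (if a (i + 1) then 0 else (i + 1) - 1)
    = sign_length n a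
      + (if act_gen i a i then 0 else i - 1) + (if act_gen i a (i + 1) then 0 else (i + 1) - 1)"
    unfolding sign_length_def using calculation False
    by (intro sum_cong_except_two) (auto simp: act_gen_apply)
  ultimately show ?thesis using False by (simp add: act_gen_apply)
qed

lemma admissible_act_gen:
  assumes "2 \<le> n" "admissible n a" "i < n"
  shows "admissible n (act_gen i a)"
proof -
  have "even (minus_count n (act_gen i a)) \<longleftrightarrow> even (minus_count n a)"
  proof (cases "i = 0")
    case True
    have "minus_count n (act_gen i a) + (if a 1 then 0 else 1) + (if a 2 then 0 else 1)
      = minus_count n a + (if act_gen i a 1 then 0 else 1) + (if act_gen i a 2 then 0 else 1)"
      unfolding minus_count_def using assms(1) True
      by (intro sum_cong_except_two) (auto simp: act_gen_apply)
    then show ?thesis using True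
      by (cases "a 1"; cases "a 2"; simp add: act_gen_apply) (metis even_Suc_Suc_iff)
  next
    case False
    have "minus_count n (act_gen i a) + (if a i then 0 else 1) + (if a (i + 1) then 0 else 1)
      = minus_count n a + (if act_gen i a i then 0 else 1) + (if act_gen i a (i + 1) then 0 else 1)"
      unfolding minus_count_def using assms(3) False
      by (intro sum_cong_except_two) (auto simp: act_gen_apply)
    then show ?thesis using False by (cases "a i"; cases "a (i + 1)"; simp add: act_gen_apply)
  qed
  then show ?thesis using assms by (auto simp: admissible_def act_gen_apply)
qed

lemma admissible_alpha: "2 \<le> n \<Longrightarrow> is_word n u \<Longrightarrow> admissible n (alpha u)"
proof (induction u rule: rev_induct)
  case Nil
  then show ?case by (simp add: alpha_def admissible_def minus_count_def)
next
  case (snoc x xs)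
  then show ?case using admissible_act_gen by (simp add: alpha_append is_word_def)
qed

lemma admissible_without_descent:
  assumes "2 \<le> n" "admissible n a" "\<And>d. \<not> descent n a d"
  shows "a = (\<lambda>_. True)"
proof -
  have "a 2"
    using assms(1) assms(3)[of 0] assms(3)[of 1] by (auto simp: descent_def numeral_2_eq_2)
  have ge2: "a m" if "2 \<le> m" for m
    using that
  proof (induction m rule: nat_induct_at_least)
    case (Suc m)
    show ?case
    proof (cases "m < n")
      case True
      then show ?thesis using Suc assms(3)[of m] by (auto simp: descent_def)
    next
      case False
      then show ?thesis using assms(2) by (simp add: admissible_def)
    qed
  qed (fact \<open>a 2\<close>)
  have "minus_count n a = (\<Sum>m\<in>{1..n}. if m = 1 then (if a 1 then 0 else 1) else 0)"
    unfolding minus_count_def using ge2 by (intro sum.cong) auto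
  then have "a 1" "a 0" using assms(1,2) by (auto simp: admissible_def split: if_splits)
  with ge2 show ?thesis by (intro ext) (metis One_nat_def less_2_cases not_le)
qed

lemma canon_word_step:
  assumes "2 \<le> n" "descent n a i"
  shows "\<exists>d. descent n a d \<and> canon_word n a = canon_word n (act_gen d a) @ [d]"
proof -
  have ex: "\<exists>d. descent n a d \<and> sign_length n (act_gen d a) < sign_length n a"
    using assms sign_length_act_descent[OF assms] by (intro exI[of _ i]) auto
  define d where "d = (LEAST d. descent n a d \<and> sign_length n (act_gen d a) < sign_length n a)"
  have "descent n a d" using LeastI_ex[OF ex] by (simp add: d_def)
  moreover have "canon_word n a = canon_word n (act_gen d a) @ [d]"
    using ex by (subst canon_word.simps) (simp add: d_def Let_def)
  ultimately show ?thesis by blast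
qed

lemma canon_word_without_descent: "(\<And>d. \<not> descent n a d) \<Longrightarrow> canon_word n a = []"
  by (subst canon_word.simps) auto

lemma length_canon_word:
  assumes "2 \<le> n" "admissible n a"
  shows "length (canon_word n a) = sign_length n a"
  using assms(2)
proof (induction "sign_length n a" arbitrary: a rule: less_induct)
  case less
  show ?case
  proof (cases "\<exists>d. descent n a d")
    case True
    then obtain d where d: "descent n a d" "canon_word n a = canon_word n (act_gen d a) @ [d]"
      using canon_word_step[OF assms(1)] by blast
    have "d < n" using d by (simp add: descent_def)
    then show ?thesis
      using less sign_length_act_descent[OF assms(1) d(1)]
        admissible_act_gen[OF assms(1) less.prems]
      by (fastforce simp: d(2))
  next
    case False
    then show ?thesis
      using admissible_without_descent assms(1) less.prems canon_word_without_descent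
      by (fastforce simp: sign_length_def)
  qed
qed

lemma act_gen_fixed_iff: "act_gen i a = a \<longleftrightarrow> (if i = 0 then a 1 \<noteq> a 2 else a i = a (i + 1))"
  by (auto simp: fun_eq_iff act_gen_apply)

lemma descent_act_gen_ascent: "ascent n a i \<Longrightarrow> descent n (act_gen i a) i"
  by (auto simp: ascent_def descent_def act_gen_apply)

lemma distinct_descents:
  assumes "descent n a i" "descent n a d" "i \<noteq> d"
  shows "\<not> braided i d" "descent n (act_gen d a) i"
proof -
  have "\<not> braided i d \<and> descent n (act_gen d a) i"
  proof (cases "i = 0 \<or> d = 0")
    case True
    then show ?thesis using assms
      by (auto simp: descent_def braided_def act_gen_apply numeral_2_eq_2)
  next
    case False
    then have "i \<noteq> d + 1" "d \<noteq> i + 1" using assms by (auto simp: descent_def)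
    then show ?thesis using assms False by (auto simp: descent_def braided_def act_gen_apply)
  qed
  then show "\<not> braided i d" "descent n (act_gen d a) i" by auto
qed

lemma descent_braided_fixed:
  assumes "descent n a d" "act_gen i a = a" "i < n" "braided d i"
  shows "descent n (act_gen d a) i" "act_gen d (act_gen i (act_gen d a)) = act_gen i (act_gen d a)"
proof -
  have "(d = 0 \<and> i = 2) \<or> (d = 2 \<and> i = 0) \<or> (d = 1 \<and> i = 2) \<or> (d = 2 \<and> i = 1)
    \<or> (2 \<le> d \<and> i = d + 1) \<or> (2 \<le> i \<and> d = i + 1)"
    using assms(4) unfolding braided_def by presburger
  then show "descent n (act_gen d a) i"
    "act_gen d (act_gen i (act_gen d a)) = act_gen i (act_gen d a)"
    using assms(1-3) unfolding act_gen_fixed_iff descent_def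
    by (elim disjE conjE; simp add: act_gen_fixed_iff act_gen_apply numeral_2_eq_2)+
qed

lemma canon_word_descent:
  assumes "2 \<le> n" "descent n a i"
  shows "cox_eq n (canon_word n a) (canon_word n (act_gen i a) @ [i])"
  using assms(2)
proof (induction "sign_length n a" arbitrary: a i rule: less_induct)
  case less
  obtain d where d: "descent n a d" "canon_word n a = canon_word n (act_gen d a) @ [d]"
    using canon_word_step[OF assms(1) less.prems] by blast
  show ?case
  proof (cases "d = i")
    case True
    then show ?thesis using d by (simp add: cox_eq.cox_refl)
  next
    case False
    let ?b = "act_gen i (act_gen d a)"
    have i_d: "\<not> braided i d" "descent n (act_gen d a) i"
      using distinct_descents[OF less.prems d(1) not_sym[OF False]] by auto
    have d_i: "descent n (act_gen i a) d"
      using distinct_descents(2)[OF d(1) less.prems] False by auto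
    have lt: "i < n" "d < n" using less.prems d(1) by (auto simp: descent_def)
    have "cox_eq n (canon_word n (act_gen d a) @ [d]) ([] @ (canon_word n ?b @ [i]) @ [d])"
      using cox_eq_context[OF less.hyps[OF _ i_d(2)], of "[]" "[d]"]
        sign_length_act_descent[OF assms(1) d(1)]
      by simp
    also have "cox_eq n \<dots> (canon_word n ?b @ [d, i] @ [])"
      using cox_eq_context[OF cox_eq_commute[OF _ lt]] cox_m_eq_2_iff[OF lt] i_d(1) False by auto
    also have "\<dots> = [] @ (canon_word n (act_gen d (act_gen i a)) @ [d]) @ [i]"
      using act_gen_commute[of i d] i_d(1) False by simp
    also have "cox_eq n \<dots> ([] @ canon_word n (act_gen i a) @ [i])"
      using cox_eq_context[OF cox_eq.cox_sym[OF less.hyps[OF _ d_i]], of "[]" "[i]"]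
        sign_length_act_descent[OF assms(1) less.prems] by simp
    finally show ?thesis using d(2) by simp
  qed
qed

lemma cox_eq_snoc_commute:
  assumes "cox_m n d i = 2" "d < n" "i < n" "cox_eq n (w @ [i]) (j # w)"
  shows "cox_eq n (w @ [d, i]) (j # w @ [d])"
proof -
  have "cox_eq n (w @ [d, i] @ []) (w @ [i, d] @ [])"
    by (rule cox_eq_context[OF cox_eq_commute[OF assms(1-3)]])
  also have "cox_eq n \<dots> ([] @ (j # w) @ [d])"
    using cox_eq_context[OF assms(4), of "[]" "[d]"] by simp
  finally show ?thesis by simp
qed

lemma cox_eq_snoc_braid:
  assumes "cox_m n i d = 3" "i < n" "d < n"
    and "cox_eq n w (w' @ [i])" "cox_eq n (w' @ [d]) (j # w')"
  shows "cox_eq n (w @ [d, i]) (j # w @ [d])"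
proof -
  have "cox_eq n ([] @ w @ [d, i]) ([] @ (w' @ [i]) @ [d, i])"
    by (rule cox_eq_context[OF assms(4)])
  also have "cox_eq n \<dots> (w' @ [d, i, d] @ [])"
    using cox_eq_context[OF cox_eq_braid[OF assms(1-3)], of w' "[]"] by simp
  also have "cox_eq n \<dots> ([] @ (j # w') @ [i, d])"
    using cox_eq_context[OF assms(5), of "[]" "[i, d]"] by simp
  also have "cox_eq n \<dots> ([j] @ w @ [d])"
    using cox_eq_context[OF cox_eq.cox_sym[OF assms(4)], of "[j]" "[d]"] by simp
  finally show ?thesis by simp
qed

lemma canon_word_fixed:
  assumes "2 \<le> n" "admissible n a" "i < n" "act_gen i a = a"
  shows "\<exists>j\<in>{1..<n}. cox_eq n (canon_word n a @ [i]) (j # canon_word n a)"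
  using assms(2-4)
proof (induction "sign_length n a" arbitrary: a i rule: less_induct)
  case less
  show ?case
  proof (cases "\<exists>d. descent n a d")
    case False
    then have "a = (\<lambda>_. True)" using admissible_without_descent assms(1) less.prems(1) by blast
    then have "i \<noteq> 0" using less.prems(3) by (auto simp: act_gen_fixed_iff split: if_splits)
    then show ?thesis
      using canon_word_without_descent False less.prems(2) by (auto intro: cox_eq.cox_refl)
  next
    case True
    then obtain d where d: "descent n a d" "canon_word n a = canon_word n (act_gen d a) @ [d]"
      using canon_word_step[OF assms(1)] by blast
    let ?b = "act_gen d a"
    have "d \<noteq> i"
      using d(1) less.prems(3) unfolding act_gen_fixed_iff descent_def
      by (cases "i = 0") (auto split: if_splits)
    have "d < n" using d(1) by (simp add: descent_def)
    have Lb: "sign_length n ?b < sign_length n a"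
      using sign_length_act_descent[OF assms(1) d(1)] by simp
    have vb: "admissible n ?b" by (rule admissible_act_gen[OF assms(1) less.prems(1) \<open>d < n\<close>])
    show ?thesis
    proof (cases "braided d i")
      case False
      then have "act_gen i ?b = ?b"
        using act_gen_commute[of i d a] \<open>d \<noteq> i\<close> less.prems(3) braided_sym by metis
      then obtain j where j: "j \<in> {1..<n}" "cox_eq n (canon_word n ?b @ [i]) (j # canon_word n ?b)"
        using less.hyps[OF Lb vb less.prems(2)] by blast
      have "cox_m n d i = 2" using cox_m_eq_2_iff \<open>d < n\<close> less.prems(2) \<open>d \<noteq> i\<close> False by blast
      then show ?thesis
        using cox_eq_snoc_commute[OF _ \<open>d < n\<close> less.prems(2) j(2)] j(1) d(2) by auto
    next
      case True
      let ?g = "act_gen i ?b"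
      have bs: "descent n ?b i" "act_gen d ?g = ?g"
        using descent_braided_fixed[OF d(1) less.prems(3,2) True] by auto
      have Lg: "sign_length n ?g < sign_length n a"
        using sign_length_act_descent[OF assms(1) bs(1)] Lb by simp
      have vg: "admissible n ?g" by (rule admissible_act_gen[OF assms(1) vb less.prems(2)])
      obtain j where j: "j \<in> {1..<n}" "cox_eq n (canon_word n ?g @ [d]) (j # canon_word n ?g)"
        using less.hyps[OF Lg vg \<open>d < n\<close> bs(2)] by blast
      have "cox_m n i d = 3"
        using cox_m_eq_3_iff less.prems(2) \<open>d < n\<close> True braided_sym by blast
      then show ?thesis
        using cox_eq_snoc_braid[OF _ less.prems(2) \<open>d < n\<close>
            canon_word_descent[OF assms(1) bs(1)] j(2)]
          j(1) d(2) by auto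
    qed
  qed
qed

lemma canon_word_snoc:
  assumes "2 \<le> n" "admissible n a" "i < n"
  shows "\<exists>q. set q \<subseteq> {1..<n} \<and> cox_eq n (canon_word n a @ [i]) (q @ canon_word n (act_gen i a))
    \<and> length q + length (canon_word n (act_gen i a)) \<le> length (canon_word n a) + 1"
proof -
  have lengths: "length (canon_word n (act_gen i a)) = sign_length n (act_gen i a)"
    "length (canon_word n a) = sign_length n a"
    using length_canon_word[OF assms(1)] admissible_act_gen[OF assms] assms(2) by auto
  consider "descent n a i" | "ascent n a i" | "act_gen i a = a"
    using assms(3) unfolding descent_def ascent_def act_gen_fixed_iff by (cases "i = 0") auto
  then show ?thesis
  proof cases
    case 1
    have "cox_eq n ([] @ canon_word n a @ [i]) ([] @ (canon_word n (act_gen i a) @ [i]) @ [i])"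
      by (rule cox_eq_context[OF canon_word_descent[OF assms(1) 1]])
    also have "cox_eq n \<dots> (canon_word n (act_gen i a) @ [] @ [])"
      using cox_eq_context[OF cox_eq_square[OF assms(3)], of "canon_word n (act_gen i a)" "[]"]
      by simp
    finally show ?thesis
      using lengths sign_length_act_descent[OF assms(1) 1] by (intro exI[of _ "[]"]) auto
  next
    case 2
    then have "descent n (act_gen i a) i" by (rule descent_act_gen_ascent)
    from canon_word_descent[OF assms(1) this] sign_length_act_descent[OF assms(1) this]
    show ?thesis using lengths
      by (intro exI[of _ "[]"]) (auto simp: act_gen_involutive cox_eq.cox_sym)
  next
    case 3
    obtain j where "j \<in> {1..<n}" "cox_eq n (canon_word n a @ [i]) (j # canon_word n a)"
      using canon_word_fixed[OF assms 3] by blast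
    with 3 show ?thesis by (intro exI[of _ "[j]"]) auto
  qed
qed

lemma cox_eq_parabolic_times_canon_word:
  assumes "2 \<le> n" "is_word n v"
  shows "\<exists>p. set p \<subseteq> {1..<n} \<and> cox_eq n v (p @ canon_word n (alpha v))
    \<and> length p + length (canon_word n (alpha v)) \<le> length v"
  using assms(2)
proof (induction v rule: rev_induct)
  case Nil
  have "canon_word n (\<lambda>_. True) = []"
    by (rule canon_word_without_descent) (simp add: descent_def)
  then show ?case by (simp add: alpha_def cox_eq.cox_refl)
next
  case (snoc x xs)
  then have "is_word n xs" "x < n" by (auto simp: is_word_def)
  obtain p where p: "set p \<subseteq> {1..<n}" "cox_eq n xs (p @ canon_word n (alpha xs))"
      "length p + length (canon_word n (alpha xs)) \<le> length xs"
    using snoc.IH[OF \<open>is_word n xs\<close>] by blast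
  obtain q where q: "set q \<subseteq> {1..<n}"
      "cox_eq n (canon_word n (alpha xs) @ [x]) (q @ canon_word n (alpha (xs @ [x])))"
      "length q + length (canon_word n (alpha (xs @ [x]))) \<le> length (canon_word n (alpha xs)) + 1"
    using canon_word_snoc[OF assms(1) admissible_alpha[OF assms(1) \<open>is_word n xs\<close>] \<open>x < n\<close>]
    by (auto simp: alpha_append)
  have "cox_eq n ([] @ xs @ [x]) ([] @ (p @ canon_word n (alpha xs)) @ [x])"
    by (rule cox_eq_context[OF p(2)])
  also have "cox_eq n \<dots> (p @ (q @ canon_word n (alpha (xs @ [x]))) @ [])"
    using cox_eq_context[OF q(2), of p "[]"] by simp
  finally show ?case using p(1,3) q(1,3) by (intro exI[of _ "p @ q"]) auto
qed

lemma cox_len_le: "cox_eq n u w \<Longrightarrow> cox_len n u \<le> length w"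
  unfolding cox_len_def by (rule Least_le) blast

lemma cox_len_attained: "\<exists>v. cox_eq n u v \<and> length v = cox_len n u"
  unfolding cox_len_def by (rule LeastI_ex) (blast intro: cox_eq.cox_refl)

lemma in_Wp_cox_eq_canon_word:
  assumes "2 \<le> n" "in_Wp n u"
  shows "cox_eq n u (canon_word n (alpha u))"
proof -
  obtain v where v: "cox_eq n u v" "length v = cox_len n u"
    using cox_len_attained by blast
  have "is_word n v" "alpha v = alpha u"
    using assms(2) cox_eq_is_word[OF v(1)] cox_eq_alpha[OF v(1)] by (auto simp: in_Wp_def)
  then obtain p where p: "set p \<subseteq> {1..<n}" "cox_eq n v (p @ canon_word n (alpha u))"
      "length p + length (canon_word n (alpha u)) \<le> length v"
    using cox_eq_parabolic_times_canon_word[OF assms(1) \<open>is_word n v\<close>] by auto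
  show ?thesis
  proof (cases p)
    case Nil
    then show ?thesis using v(1) p(2) by (auto intro: cox_eq.cox_trans)
  next
    case (Cons i p')
    then have "i \<in> {1..<n}" using p(1) by auto
    have "cox_eq n ([i] @ u @ []) ([i] @ (p @ canon_word n (alpha u)) @ [])"
      by (rule cox_eq_context[OF cox_eq.cox_trans[OF v(1) p(2)]])
    also have "\<dots> = [] @ [i, i] @ (p' @ canon_word n (alpha u))"
      using Cons by simp
    also have "cox_eq n \<dots> ([] @ [] @ (p' @ canon_word n (alpha u)))"
      using \<open>i \<in> {1..<n}\<close> by (intro cox_eq_context cox_eq_square) simp
    finally have "cox_len n (i # u) < cox_len n u"
      using cox_len_le p(3) v(2) Cons by fastforce
    moreover have "cox_len n u < cox_len n (i # u)"
      using assms(2) \<open>i \<in> {1..<n}\<close> by (simp add: in_Wp_def)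
    ultimately show ?thesis by simp
  qed
qed

lemma in_Wp_cox_eq_if_alpha_eq:
  assumes "2 \<le> n" "in_Wp n u" "in_Wp n v" "alpha u = alpha v"
  shows "cox_eq n u v"
  using in_Wp_cox_eq_canon_word[OF assms(1,2)] in_Wp_cox_eq_canon_word[OF assms(1,3)] assms(4)
  by (metis cox_eq.cox_sym cox_eq.cox_trans)

lemma card_Collect_bij_betw: "bij_betw f A B \<Longrightarrow> card {x\<in>A. Q (f x)} = card {y\<in>B. Q y}"
  by (rule bij_betw_same_card[of f]) (auto simp: bij_betw_def inj_on_def)

section \<open>Non-crossing matchings of a labelled point set\<close>

definition noncrossing_matching :: "'a::linorder set \<Rightarrow> ('a \<Rightarrow> bool) \<Rightarrow> ('a \<times> 'a) set \<Rightarrow> bool" where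
  "noncrossing_matching P lab M \<longleftrightarrow>
     (\<forall>(a, b)\<in>M. a \<in> P \<and> b \<in> P \<and> a < b \<and> lab a \<and> \<not> lab b) \<and>
     (\<forall>p\<in>P. \<exists>!e\<in>M. fst e = p \<or> snd e = p) \<and>
     (\<forall>(a, b)\<in>M. \<forall>(c, d)\<in>M. \<not> (a < c \<and> c < b \<and> b < d))"

context
  fixes P :: "'a::linorder set" and lab :: "'a \<Rightarrow> bool" and M :: "('a \<times> 'a) set"
  assumes matching: "noncrossing_matching P lab M"
begin

lemma noncrossing_matching_arcD: "(a, b) \<in> M \<Longrightarrow> a \<in> P \<and> b \<in> P \<and> a < b \<and> lab a \<and> \<not> lab b"
  using matching unfolding noncrossing_matching_def by fast

lemma noncrossing_matching_not_crossing: "(a, b) \<in> M \<Longrightarrow> (c, d) \<in> M \<Longrightarrow> \<not> (a < c \<and> c < b \<and> b < d)"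
  using matching unfolding noncrossing_matching_def by fast

lemma noncrossing_matching_arc_eq:
  assumes "(a, b) \<in> M" "(c, d) \<in> M" "p \<in> {a, b}" "p \<in> {c, d}"
  shows "a = c \<and> b = d"
proof -
  have "p \<in> P" using noncrossing_matching_arcD[OF assms(1)] assms(3) by auto
  then obtain e where e: "\<forall>e'\<in>M. fst e' = p \<or> snd e' = p \<longrightarrow> e' = e"
    using matching unfolding noncrossing_matching_def by blast
  have "(a, b) = e" using e[rule_format, OF assms(1)] assms(3) by auto
  moreover have "(c, d) = e" using e[rule_format, OF assms(2)] assms(4) by auto
  ultimately show ?thesis by (metis prod.inject)
qed

lemma noncrossing_matching_arc_at:
  assumes "p \<in> P"
  obtains c d where "(c, d) \<in> M" "c = p \<or> d = p"
proof -
  obtain e where "e \<in> M" "fst e = p \<or> snd e = p"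
    using matching assms unfolding noncrossing_matching_def by blast
  then show ?thesis using that[of "fst e" "snd e"] by simp
qed

lemma noncrossing_matching_left_end: "p \<in> P \<Longrightarrow> lab p \<Longrightarrow> \<exists>b. (p, b) \<in> M"
  by (metis noncrossing_matching_arc_at noncrossing_matching_arcD)

lemma noncrossing_matching_right_end: "p \<in> P \<Longrightarrow> \<not> lab p \<Longrightarrow> \<exists>a. (a, p) \<in> M"
  by (metis noncrossing_matching_arc_at noncrossing_matching_arcD)

lemma bij_betw_fst_noncrossing_matching: "bij_betw fst M {p\<in>P. lab p}"
proof (rule bij_betw_imageI)
  show "inj_on fst M"
  proof (rule inj_onI)
    fix x y assume "x \<in> M" "y \<in> M" "fst x = fst y"
    moreover obtain a b c d where "x = (a, b)" "y = (c, d)" by fastforce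
    ultimately show "x = y" using noncrossing_matching_arc_eq[of a b c d a] by simp
  qed
  show "fst ` M = {p\<in>P. lab p}"
    using noncrossing_matching_arcD noncrossing_matching_left_end by force
qed

lemma bij_betw_snd_noncrossing_matching: "bij_betw snd M {p\<in>P. \<not> lab p}"
proof (rule bij_betw_imageI)
  show "inj_on snd M"
  proof (rule inj_onI)
    fix x y assume "x \<in> M" "y \<in> M" "snd x = snd y"
    moreover obtain a b c d where "x = (a, b)" "y = (c, d)" by fastforce
    ultimately show "x = y" using noncrossing_matching_arc_eq[of a b c d b] by simp
  qed
  show "snd ` M = {p\<in>P. \<not> lab p}"
    using noncrossing_matching_arcD noncrossing_matching_right_end by force
qed

lemma finite_noncrossing_matching: "finite P \<Longrightarrow> finite M"
  by (rule finite_subset[of _ "P \<times> P"]) (auto dest: noncrossing_matching_arcD)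

lemma card_arcs_fst: "card {e\<in>M. Q (fst e)} = card {p\<in>P. lab p \<and> Q p}"
  using card_Collect_bij_betw[OF bij_betw_fst_noncrossing_matching, of Q] by (simp add: conj_ac)

lemma card_arcs_snd: "card {e\<in>M. Q (snd e)} = card {p\<in>P. \<not> lab p \<and> Q p}"
  using card_Collect_bij_betw[OF bij_betw_snd_noncrossing_matching, of Q] by (simp add: conj_ac)

text \<open>Arcs starting strictly inside an arc end strictly inside it, so an arc encloses at least
  as many right ends as left ends.\<close>
lemma card_left_ends_under_arc:
  assumes "finite P" "(a, b) \<in> M"
  shows "card {y\<in>P. lab y \<and> a < y \<and> y < b} \<le> card {y\<in>P. \<not> lab y \<and> a < y \<and> y < b}"
proof -
  have "{e\<in>M. a < fst e \<and> fst e < b} \<subseteq> {e\<in>M. a < snd e \<and> snd e < b}"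
  proof clarify
    fix c d assume cd: "(c, d) \<in> M" "a < fst (c, d)" "fst (c, d) < b"
    have "d \<noteq> b" using noncrossing_matching_arc_eq[OF assms(2) cd(1), of b] cd by auto
    then show "a < snd (c, d) \<and> snd (c, d) < b"
      using noncrossing_matching_not_crossing[OF assms(2) cd(1)]
        noncrossing_matching_arcD[OF cd(1)] cd
      by auto
  qed
  then show ?thesis
    using card_mono[OF finite_subset] finite_noncrossing_matching[OF assms(1)]
      card_arcs_fst[of "\<lambda>y. a < y \<and> y < b"] card_arcs_snd[of "\<lambda>y. a < y \<and> y < b"]
    by (metis (no_types, lifting) mem_Collect_eq subsetI)
qed

lemma card_right_ends_after_left_end:
  assumes "finite P" "(a, b) \<in> M" "x < b"
  shows "card {y\<in>P. \<not> lab y \<and> a < y \<and> y \<le> x} \<le> card {y\<in>P. lab y \<and> a < y \<and> y \<le> x}"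
proof -
  have "{e\<in>M. a < snd e \<and> snd e \<le> x} \<subseteq> {e\<in>M. a < fst e \<and> fst e \<le> x}"
  proof clarify
    fix c d assume cd: "(c, d) \<in> M" "a < snd (c, d)" "snd (c, d) \<le> x"
    have "c \<noteq> a" using noncrossing_matching_arc_eq[OF assms(2) cd(1), of a] cd assms(3) by auto
    then show "a < fst (c, d) \<and> fst (c, d) \<le> x"
      using noncrossing_matching_not_crossing[OF cd(1) assms(2)] noncrossing_matching_arcD[OF cd(1)]
        cd assms(3) by auto
  qed
  then show ?thesis
    using card_mono[OF finite_subset] finite_noncrossing_matching[OF assms(1)]
      card_arcs_fst[of "\<lambda>y. a < y \<and> y \<le> x"] card_arcs_snd[of "\<lambda>y. a < y \<and> y \<le> x"]
    by (metis (no_types, lifting) mem_Collect_eq subsetI)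
qed

end

lemma noncrossing_matching_same_left_end:
  assumes "finite P" "noncrossing_matching P lab M" "noncrossing_matching P lab M'"
    "(a, b) \<in> M" "(a, b') \<in> M'"
  shows "\<not> b < b'"
proof
  assume "b < b'"
  have b: "b \<in> P" "\<not> lab b" "a < b" using noncrossing_matching_arcD[OF assms(2,4)] by auto
  then have "{y\<in>P. \<not> lab y \<and> a < y \<and> y \<le> b} = insert b {y\<in>P. \<not> lab y \<and> a < y \<and> y < b}"
    "{y\<in>P. lab y \<and> a < y \<and> y \<le> b} = {y\<in>P. lab y \<and> a < y \<and> y < b}"
    by (auto simp: le_less)
  then show False
    using card_left_ends_under_arc[OF assms(2,1,4)]
      card_right_ends_after_left_end[OF assms(3,1,5) \<open>b < b'\<close>] assms(1)
    by simp
qed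

lemma noncrossing_matching_unique:
  assumes "finite P" "noncrossing_matching P lab M" "noncrossing_matching P lab M'"
  shows "M = M'"
proof -
  have "M \<subseteq> M'" if M: "noncrossing_matching P lab M" and M': "noncrossing_matching P lab M'"
    for M M'
  proof clarify
    fix a b assume ab: "(a, b) \<in> M"
    then obtain b' where "(a, b') \<in> M'"
      using noncrossing_matching_arcD[OF M] noncrossing_matching_left_end[OF M'] by blast
    then show "(a, b) \<in> M'"
      using noncrossing_matching_same_left_end[OF assms(1)] M M' ab by (metis linorder_cases)
  qed
  then show ?thesis using assms by blast
qed

lemma ex1_arc_at_insert:
  assumes M: "noncrossing_matching (P - {a, b}) lab M" and "p \<in> P"
  shows "\<exists>!e\<in>insert (a, b) M. fst e = p \<or> snd e = p"
proof (cases "p \<in> {a, b}")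
  case True
  show ?thesis
  proof (rule ex1I[of _ "(a, b)"])
    fix e assume e: "e \<in> insert (a, b) M \<and> (fst e = p \<or> snd e = p)"
    show "e = (a, b)"
    proof (rule ccontr)
      assume "e \<noteq> (a, b)"
      then have "fst e \<in> P - {a, b}" "snd e \<in> P - {a, b}"
        using e noncrossing_matching_arcD[OF M, of "fst e" "snd e"] by auto
      then show False using e True by auto
    qed
  qed (use True in auto)
next
  case False
  then have "\<exists>!e\<in>M. fst e = p \<or> snd e = p"
    using M \<open>p \<in> P\<close> by (simp add: noncrossing_matching_def)
  then obtain e where e: "e \<in> M" "fst e = p \<or> snd e = p"
    and unique: "\<forall>e'\<in>M. fst e' = p \<or> snd e' = p \<longrightarrow> e' = e"
    by blast
  show ?thesis
  proof (rule ex1I[of _ e])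
    fix e' assume e': "e' \<in> insert (a, b) M \<and> (fst e' = p \<or> snd e' = p)"
    then have "e' \<in> M" using False by auto
    then show "e' = e" using unique e' by blast
  qed (use e in simp)
qed

lemma noncrossing_matching_insert:
  assumes M: "noncrossing_matching (P - {a, b}) lab M"
    and "a \<in> P" "b \<in> P" "a < b" "lab a" "\<not> lab b" and gap: "\<forall>y\<in>P. \<not> (a < y \<and> y < b)"
  shows "noncrossing_matching P lab (insert (a, b) M)"
proof -
  note arcs = noncrossing_matching_arcD[OF M]
  have A: "\<forall>(c, d)\<in>insert (a, b) M. c \<in> P \<and> d \<in> P \<and> c < d \<and> lab c \<and> \<not> lab d"
    using arcs assms(2-6) by auto
  have B: "\<forall>p\<in>P. \<exists>!e\<in>insert (a, b) M. fst e = p \<or> snd e = p"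
    using ex1_arc_at_insert[OF M] by blast
  have C: "\<forall>(c, d)\<in>insert (a, b) M. \<forall>(e, f)\<in>insert (a, b) M. \<not> (c < e \<and> e < d \<and> d < f)"
  proof (intro ballI, clarify)
    fix c d e f
    assume cd: "(c, d) \<in> insert (a, b) M" and ef: "(e, f) \<in> insert (a, b) M"
      and cross: "c < e" "e < d" "d < f"
    show False
    proof (cases "(c, d) = (a, b)")
      case True
      then have "(e, f) \<in> M" using ef cross by auto
      then show False using arcs[of e f] gap True cross by auto
    next
      case False
      then have "(c, d) \<in> M" using cd by blast
      show False
      proof (cases "(e, f) = (a, b)")
        case True
        then show False using arcs[OF \<open>(c, d) \<in> M\<close>] gap cross by auto
      next
        case False
        then show False
          using ef noncrossing_matching_not_crossing[OF M \<open>(c, d) \<in> M\<close>] cross by auto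
      qed
    qed
  qed
  show ?thesis
    unfolding noncrossing_matching_def using A B C by blast
qed

definition balanced_labeling :: "'a::linorder set \<Rightarrow> ('a \<Rightarrow> bool) \<Rightarrow> bool" where
  "balanced_labeling P lab \<longleftrightarrow> card {y\<in>P. lab y} = card {y\<in>P. \<not> lab y} \<and>
     (\<forall>x. card {y\<in>P. \<not> lab y \<and> y \<le> x} \<le> card {y\<in>P. lab y \<and> y \<le> x})"

lemma balanced_labeling_innermost_pair:
  assumes "finite P" "P \<noteq> {}" "balanced_labeling P lab"
  obtains a b where "a \<in> P" "b \<in> P" "a < b" "lab a" "\<not> lab b"
    "\<forall>y\<in>P. \<not> (a < y \<and> y < b)" "\<forall>y\<in>P. \<not> lab y \<longrightarrow> b \<le> y"
proof -
  define b where "b = Min {y\<in>P. \<not> lab y}"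
  have "{y\<in>P. \<not> lab y} \<noteq> {}"
  proof
    assume "{y\<in>P. \<not> lab y} = {}"
    then have "card {y\<in>P. lab y} = 0" using assms(3) unfolding balanced_labeling_def
      by (metis card.empty)
    then have "{y\<in>P. lab y} = {}" using assms(1) by simp
    with \<open>{y\<in>P. \<not> lab y} = {}\<close> show False using assms(2) by blast
  qed
  then have b: "b \<in> P" "\<not> lab b" "\<forall>y\<in>P. \<not> lab y \<longrightarrow> b \<le> y"
    using Min_in[of "{y\<in>P. \<not> lab y}"] assms(1) by (auto simp: b_def)
  have "0 < card {y\<in>P. \<not> lab y \<and> y \<le> b}"
    using b assms(1) by (subst card_gt_0_iff) auto
  also have "\<dots> \<le> card {y\<in>P. lab y \<and> y \<le> b}"
    using assms(3) by (simp add: balanced_labeling_def)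
  finally have "{y\<in>P. lab y \<and> y \<le> b} \<noteq> {}" by (metis card.empty less_irrefl)
  define a where "a = Max {y\<in>P. lab y \<and> y \<le> b}"
  have a: "a \<in> P" "lab a" "a \<le> b" "\<forall>y\<in>P. lab y \<and> y \<le> b \<longrightarrow> y \<le> a"
    using Max_in[OF _ \<open>{y\<in>P. lab y \<and> y \<le> b} \<noteq> {}\<close>] assms(1) by (auto simp: a_def)
  have "a < b" using a b by (metis order_le_less)
  moreover have "\<forall>y\<in>P. \<not> (a < y \<and> y < b)"
    using a(4) b(3) by (metis leD less_imp_le)
  ultimately show ?thesis using that a b by blast
qed

lemma balanced_labeling_remove_pair:
  assumes "finite P" "balanced_labeling P lab" "a \<in> P" "b \<in> P" "lab a" "\<not> lab b" "a \<le> b"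
    "\<forall>y\<in>P. \<not> lab y \<longrightarrow> b \<le> y"
  shows "balanced_labeling (P - {a, b}) lab"
proof -
  have "card {y\<in>P - {a, b}. lab y \<and> Q y} = card {y\<in>P. lab y \<and> Q y} - 1"
    "card {y\<in>P - {a, b}. \<not> lab y \<and> R y} = card {y\<in>P. \<not> lab y \<and> R y} - 1"
    if "Q a" "R b" for Q R
  proof -
    have "{y\<in>P - {a, b}. lab y \<and> Q y} = {y\<in>P. lab y \<and> Q y} - {a}"
      "{y\<in>P - {a, b}. \<not> lab y \<and> R y} = {y\<in>P. \<not> lab y \<and> R y} - {b}"
      using assms(5,6) by auto
    then show "card {y\<in>P - {a, b}. lab y \<and> Q y} = card {y\<in>P. lab y \<and> Q y} - 1"
      "card {y\<in>P - {a, b}. \<not> lab y \<and> R y} = card {y\<in>P. \<not> lab y \<and> R y} - 1"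
      using assms(1,3-6) that by simp_all
  qed
  note remove = this[of "\<lambda>_. True" "\<lambda>_. True", simplified] this[of "\<lambda>y. y \<le> x" "\<lambda>y. y \<le> x" for x]
  have "card {y\<in>P - {a, b}. \<not> lab y \<and> y \<le> x} \<le> card {y\<in>P - {a, b}. lab y \<and> y \<le> x}" for x
  proof (cases "b \<le> x")
    case True
    then show ?thesis using remove(3,4)[of x] assms(2,7)
      by (simp add: balanced_labeling_def diff_le_mono)
  next
    case False
    then have "{y\<in>P - {a, b}. \<not> lab y \<and> y \<le> x} = {}" using assms(8) by force
    then show ?thesis by (metis card.empty zero_le)
  qed
  then show ?thesis using remove(1,2) assms(2) by (simp add: balanced_labeling_def)
qed

lemma noncrossing_matching_exists:
  "finite P \<Longrightarrow> balanced_labeling P lab \<Longrightarrow> \<exists>M. noncrossing_matching P lab M"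
proof (induction "card P" arbitrary: P rule: less_induct)
  case less
  show ?case
  proof (cases "P = {}")
    case True
    then show ?thesis by (auto simp: noncrossing_matching_def)
  next
    case False
    then obtain a b where ab: "a \<in> P" "b \<in> P" "a < b" "lab a" "\<not> lab b"
      "\<forall>y\<in>P. \<not> (a < y \<and> y < b)" "\<forall>y\<in>P. \<not> lab y \<longrightarrow> b \<le> y"
      using balanced_labeling_innermost_pair less.prems by metis
    have "card (P - {a, b}) < card P"
      using less.prems(1) ab(1) by (intro psubset_card_mono) auto
    moreover have "balanced_labeling (P - {a, b}) lab"
      by (rule balanced_labeling_remove_pair[OF less.prems ab(1,2,4,5) less_imp_le[OF ab(3)] ab(7)])
    ultimately obtain M where "noncrossing_matching (P - {a, b}) lab M"
      using less.hyps less.prems(1) by blast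
    then show ?thesis using noncrossing_matching_insert ab(1-6) by blast
  qed
qed

section \<open>The extended labeling is balanced\<close>

lemma card_split_filter: "finite S \<Longrightarrow> card S = card {p\<in>S. P p} + card {p\<in>S. \<not> P p}"
  by (subst card_Un_disjoint[symmetric]) (auto intro: arg_cong[of _ _ card])

lemma card_sign_symmetric:
  fixes S :: "'a::ab_group_add set"
  assumes "finite S" "\<And>p. p \<in> S \<Longrightarrow> - p \<in> S \<and> (lab (- p) \<longleftrightarrow> \<not> lab p)"
  shows "card S = 2 * card {p\<in>S. lab p}"
proof -
  have "bij_betw uminus {p\<in>S. lab p} {p\<in>S. \<not> lab p}"
  proof (rule bij_betw_imageI)
    show "uminus ` {p\<in>S. lab p} = {p\<in>S. \<not> lab p}"
    proof
      show "{p\<in>S. \<not> lab p} \<subseteq> uminus ` {p\<in>S. lab p}"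
      proof
        fix q assume "q \<in> {p\<in>S. \<not> lab p}"
        then have "- q \<in> {p\<in>S. lab p}" using assms(2) by auto
        then show "q \<in> uminus ` {p\<in>S. lab p}" by (metis image_eqI minus_minus)
      qed
    qed (use assms(2) in auto)
  qed (simp add: inj_on_def)
  then show ?thesis using card_split_filter[OF assms(1), of lab] bij_betw_same_card by fastforce
qed

lemma card_Pts: "card (Pts n) = 4 * n"
  by (simp add: Pts_def)

lemma finite_Pts: "finite (Pts n)"
  by (simp add: Pts_def)

lemma ext_label_uminus: "p \<in> Pts n \<Longrightarrow> - p \<in> Pts n \<and> (ext_label n u (- p) \<longleftrightarrow> \<not> ext_label n u p)"
  by (auto simp: Pts_def ext_label_def)

lemma card_ext_label_plus: "card {p\<in>Pts n. ext_label n u p} = 2 * n"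
  using card_sign_symmetric[of "Pts n" "ext_label n u", OF _ ext_label_uminus] card_Pts
  by (simp add: Pts_def)

lemma balanced_ext_label: "balanced_labeling (Pts n) (ext_label n u)"
proof -
  let ?lab = "ext_label n u"
  have "card {p\<in>Pts n. \<not> ?lab p \<and> p \<le> x} \<le> card {p\<in>Pts n. ?lab p \<and> p \<le> x}" for x
  proof (cases "x < - int n")
    case True
    then have "{p\<in>Pts n. \<not> ?lab p \<and> p \<le> x} = {}" by (auto simp: ext_label_def)
    then show ?thesis by (metis card.empty zero_le)
  next
    case False
    note not_left = this
    show ?thesis
    proof (cases "x \<le> int n")
      case True
      define Mid where "Mid = {p\<in>Pts n. - int n \<le> p \<and> p \<le> int n}"
      have Mid: "Mid = {- int n..int n} - {0}" by (auto simp: Mid_def Pts_def)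
      have "card Mid = 2 * card {p\<in>Mid. ?lab p}"
        by (rule card_sign_symmetric) (auto simp: Mid ext_label_def)
      then have "card {p\<in>Mid. \<not> ?lab p} = n"
        using card_split_filter[of Mid ?lab] by (simp add: Mid)
      have "card {p\<in>Pts n. \<not> ?lab p \<and> p \<le> x} \<le> card {p\<in>Mid. \<not> ?lab p}"
      proof (rule card_mono)
        show "finite {p\<in>Mid. \<not> ?lab p}" by (rule finite_subset[of _ Mid]) (auto simp: Mid)
      qed (use True in \<open>auto simp: Mid_def Pts_def ext_label_def\<close>)
      also have "\<dots> = card {- 2 * int n..< - int n}"
        using \<open>card {p\<in>Mid. \<not> ?lab p} = n\<close> by simp
      also have "\<dots> \<le> card {p\<in>Pts n. ?lab p \<and> p \<le> x}"
      proof (rule card_mono)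
        show "finite {p\<in>Pts n. ?lab p \<and> p \<le> x}" by (rule finite_subset[OF _ finite_Pts]) auto
      qed (use not_left in \<open>auto simp: Pts_def ext_label_def\<close>)
      finally show ?thesis .
    next
      case False
      then have "{p\<in>Pts n. ?lab p \<and> p \<le> x} = {p\<in>Pts n. ?lab p}"
        by (auto simp: ext_label_def)
      moreover have "card {p\<in>Pts n. \<not> ?lab p \<and> p \<le> x} \<le> card {p\<in>Pts n. \<not> ?lab p}"
        by (rule card_mono) (auto intro: finite_subset[OF _ finite_Pts])
      ultimately show ?thesis
        using card_split_filter[of "Pts n" ?lab] card_ext_label_plus card_Pts by (simp add: Pts_def)
    qed
  qed
  then show ?thesis
    using card_split_filter[of "Pts n" "ext_label n u"] card_ext_label_plus card_Pts
    by (simp add: balanced_labeling_def conj_commute Pts_def)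
qed

lemma matching_noncrossing: "noncrossing_matching (Pts n) (ext_label n u) (matching n u)"
proof -
  obtain M where M: "noncrossing_matching (Pts n) (ext_label n u) M"
    using noncrossing_matching_exists[OF finite_Pts balanced_ext_label] by blast
  have "card M = 2 * n"
    using bij_betw_same_card[OF bij_betw_fst_noncrossing_matching[OF M]] card_ext_label_plus
    by simp
  then have "is_matching n (ext_label n u) M"
    using M by (simp add: is_matching_def noncrossing_matching_def)
  moreover have "M' = M" if "is_matching n (ext_label n u) M'" for M'
    using that noncrossing_matching_unique[OF finite_Pts _ M]
    by (simp add: is_matching_def noncrossing_matching_def)
  ultimately have "matching n u = M"
    unfolding matching_def by (rule the_equality)
  then show ?thesis using M by simp
qed

text \<open>An arc with negative right end has negative left end, so the arcs from a negative to a
  positive point are counted by the difference between the left and the right ends among the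
  negative points. These two numbers add up to the \<open>2 n\<close> negative points.\<close>
lemma even_card_neg_pos_arcs: "even (card (neg_pos_arcs n u))"
proof -
  let ?M = "matching n u" and ?lab = "ext_label n u"
  note M = matching_noncrossing[of n u]
  have sub: "{e\<in>?M. snd e < 0} \<subseteq> {e\<in>?M. fst e < 0}"
    using noncrossing_matching_arcD[OF M] by fastforce
  have "neg_pos_arcs n u = {e\<in>?M. fst e < 0} - {e\<in>?M. snd e < 0}"
    using noncrossing_matching_arcD[OF M] by (fastforce simp: neg_pos_arcs_def Pts_def)
  then have "card (neg_pos_arcs n u) = card {e\<in>?M. fst e < 0} - card {e\<in>?M. snd e < 0}"
    using sub finite_noncrossing_matching[OF M finite_Pts] by (simp add: card_Diff_subset)
  moreover have "card {e\<in>?M. fst e < 0} + card {e\<in>?M. snd e < 0} = 2 * n"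
  proof -
    have "{p\<in>Pts n. p < 0} = {- 2 * int n..-1}" by (auto simp: Pts_def)
    then have "card {p\<in>Pts n. p < 0} = 2 * n" by simp
    then show ?thesis
      using card_split_filter[of "{p\<in>Pts n. p < 0}" ?lab] finite_Pts
        card_arcs_fst[OF M, of "\<lambda>p. p < 0"] card_arcs_snd[OF M, of "\<lambda>p. p < 0"]
      by (simp add: conj_ac)
  qed
  ultimately show ?thesis by presburger
qed

lemma cup_diagram_left_end_pos:
  assumes "0 < p"
  shows "(\<exists>b. (p, b) \<in> cup_diagram n u) \<longleftrightarrow> (\<exists>b. (p, b) \<in> matching n u)"
proof -
  let ?S = "{y. y > 0 \<and> (- y, y) \<in> neg_pos_arcs n u}"
  let ?ys = "sorted_list_of_set ?S"
  have pos: "0 < y" if "y \<in> set ?ys" for y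
    using that by (cases "finite ?S") auto
  let ?linked = "\<Union>i<length ?ys div 2.
    {(- (?ys ! (2 * i + 1)), ?ys ! (2 * i)), (- (?ys ! (2 * i)), ?ys ! (2 * i + 1))}"
  have linked_neg: "fst e < 0" if "e \<in> ?linked" for e
  proof -
    obtain i where i: "i < length ?ys div 2" and
      "e = (- (?ys ! (2 * i + 1)), ?ys ! (2 * i)) \<or> e = (- (?ys ! (2 * i)), ?ys ! (2 * i + 1))"
      using \<open>e \<in> ?linked\<close> by blast
    moreover have "0 < ?ys ! (2 * i)" "0 < ?ys ! (2 * i + 1)"
      using i by (intro pos nth_mem; linarith)+
    ultimately show ?thesis by auto
  qed
  have "cup_diagram n u = (matching n u - neg_pos_arcs n u) \<union> ?linked"
    by (simp add: cup_diagram_def Let_def)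
  moreover have "(p, b) \<notin> neg_pos_arcs n u" for b
    using assms by (simp add: neg_pos_arcs_def)
  ultimately have "(p, b) \<in> cup_diagram n u \<longleftrightarrow> (p, b) \<in> matching n u" for b
    using linked_neg[of "(p, b)"] assms by auto
  then show ?thesis by simp
qed

lemma alpha_iff_cup_diagram_left_end:
  assumes "1 \<le> j" "j \<le> n"
  shows "alpha u j \<longleftrightarrow> (\<exists>b. (int j, b) \<in> cup_diagram n u)"
proof -
  have "int j \<in> Pts n" "ext_label n u (int j) = alpha u j"
    using assms by (auto simp: Pts_def ext_label_def)
  then have "alpha u j \<longleftrightarrow> (\<exists>b. (int j, b) \<in> matching n u)"
    using noncrossing_matching_left_end[OF matching_noncrossing]
      noncrossing_matching_arcD[OF matching_noncrossing] by blast
  then show ?thesis using cup_diagram_left_end_pos[of "int j"] assms by simp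
qed

lemma alpha_eq_if_cup_diagram_eq:
  assumes "2 \<le> n" "is_word n u" "is_word n v" "cup_diagram n u = cup_diagram n v"
  shows "alpha u = alpha v"
proof
  fix m
  show "alpha u m = alpha v m"
  proof (cases "1 \<le> m \<and> m \<le> n")
    case True
    then show ?thesis using alpha_iff_cup_diagram_left_end assms(4) by blast
  next
    case False
    then show ?thesis using admissible_alpha[OF assms(1,2)] admissible_alpha[OF assms(1,3)]
      by (auto simp: admissible_def not_le less_one)
  qed
qed

theorem lemma2p7:
  fixes n :: nat
  assumes "n \<ge> 4"
  shows "(\<forall>u. in_Wp n u \<longrightarrow> even (card (neg_pos_arcs n u))) \<and>
         (\<forall>u v. in_Wp n u \<longrightarrow> in_Wp n v \<longrightarrow> cup_diagram n u = cup_diagram n v \<longrightarrow> cox_eq n u v)"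
proof (intro conjI allI impI)
  fix u show "even (card (neg_pos_arcs n u))" by (rule even_card_neg_pos_arcs)
next
  fix u v assume "in_Wp n u" "in_Wp n v" "cup_diagram n u = cup_diagram n v"
  moreover have "2 \<le> n" using assms by simp
  ultimately show "cox_eq n u v"
    using alpha_eq_if_cup_diagram_eq in_Wp_cox_eq_if_alpha_eq by (simp add: in_Wp_def)
qed

end
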